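(* If $U$ is a negative finite multiset on $\mathbb{N}^2$, then $\mathrm{BRSK}(U)$ is a negative semistandard notched bitableau.
   Context: $\mathbb{N}$ is the set of positive integers; a finite multiset on $\mathbb{N}^2$ is negative if each of its elements $(a,b)$ satisfies $a<b$. Notched tableau: finite sequence of rows $P_1,\dots,P_r$, each a left-justified, possibly empty row of boxes with positive integer entries; row strict if each row strictly increases left to right (a row is then identified with its set of entries). Notched bitableau: pair $(P,Q)$ of notched tableaux of the same shape. Termwise order on finite multisets of $\mathbb{N}$ of equal size: $\{a_1\le\dots\le a_k\}\le\{b_1\le\dots\le b_k\}$ iff $a_i\le b_i$ for all $i$; $A\lessdot B$ iff $A,B$ nonempty and $a_i<b_i$ for all $i$. "$A-C\le B-D$" means $A\sqcup D\le B\sqcup C$ (multiset union). $(P,Q)$ is semistandard if both are row strict and $P_1-Q_1\le\cdots\le P_r-Q_r$; negative if $P_i\lessdot Q_i$ for all $i$. Bounded insertion: for $b\in\mathbb{N}$, a row-strict notched tableau $P$ is semistandard on $b$ if the tableau $P^{<b}$ obtained by deleting all entries $\ge b$ has weakly decreasing row lengths (top to bottom) and weakly increasing columns. For such $P$ and $a<b$, $P\xleftarrow{b}a$ is computed by: (1) remove the entries $\ge b$ to get $P^{<b}$; (2) insert $a$ into $P^{<b}$ by row insertion: into a row, if $a$ exceeds all its entries append $a$ in a new box at the right end and stop; otherwise replace the smallest entry $\ge a$ by $a$ and insert the replaced entry into the next row the same way (a row below the last row counts as empty); the box added at the end is the new box; (3) put the removed entries back at the right ends of the rows they came from. BRSK: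 list $U=\{(a_1,b_1),\dots,(a_t,b_t)\}$ so that $b_1\ge\dots\ge b_t$ and $a_i\ge a_{i+1}$ whenever $b_i=b_{i+1}$. Start with $(P^{(0)},Q^{(0)})=(\emptyset,\emptyset)$; set $P^{(i+1)}=P^{(i)}\xleftarrow{b_{i+1}}a_{i+1}$, and obtain $Q^{(i+1)}$ by inserting $b_{i+1}$ at the left end of row $j$ of $Q^{(i)}$ (shifting that row right), where $j$ is the row of the new box. Then $\mathrm{BRSK}(U)=(P^{(t)},Q^{(t)})$. *)

theory Defs
  imports "HOL-Library.Multiset" "HOL-Library.Product_Lexorder"
begin

text \<open>Notched tableaux are lists of rows (top row first); a row is a list of entries,
  read left to right.  Entries are natural numbers, positivity is required separately.
  Row indices are 0-based internally.\<close>

type_synonym tableau = "nat list list"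

definition pos_entries :: "tableau \<Rightarrow> bool" where
  "pos_entries P \<longleftrightarrow> (\<forall>r\<in>set P. \<forall>x\<in>set r. 0 < x)"

definition row_strict :: "tableau \<Rightarrow> bool" where
  "row_strict P \<longleftrightarrow> (\<forall>r\<in>set P. sorted_wrt (<) r)"

definition same_shape :: "tableau \<Rightarrow> tableau \<Rightarrow> bool" where
  "same_shape P Q \<longleftrightarrow> length P = length Q \<and> (\<forall>i<length P. length (P ! i) = length (Q ! i))"

definition termwise_le :: "nat multiset \<Rightarrow> nat multiset \<Rightarrow> bool" where
  "termwise_le A B \<longleftrightarrow> size A = size B \<and>
     (\<forall>i<size A. sorted_list_of_multiset A ! i \<le> sorted_list_of_multiset B ! i)"

definition termwise_lt :: "nat multiset \<Rightarrow> nat multiset \<Rightarrow> bool" where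
  "termwise_lt A B \<longleftrightarrow> A \<noteq> {#} \<and> B \<noteq> {#} \<and> size A = size B \<and>
     (\<forall>i<size A. sorted_list_of_multiset A ! i < sorted_list_of_multiset B ! i)"

text \<open>\<open>A - C \<le> B - D\<close> means \<open>A \<union> D \<le> B \<union> C\<close> (multiset union).\<close>
definition diff_le :: "nat multiset \<Rightarrow> nat multiset \<Rightarrow> nat multiset \<Rightarrow> nat multiset \<Rightarrow> bool" where
  "diff_le A C B D \<longleftrightarrow> termwise_le (A + D) (B + C)"

definition semistandard_bitableau :: "tableau \<Rightarrow> tableau \<Rightarrow> bool" where
  "semistandard_bitableau P Q \<longleftrightarrow>
     pos_entries P \<and> pos_entries Q \<and> same_shape P Q \<and> row_strict P \<and> row_strict Q \<and>
     (\<forall>i. Suc i < length P \<longrightarrow>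
        diff_le (mset (P ! i)) (mset (Q ! i)) (mset (P ! Suc i)) (mset (Q ! Suc i)))"

definition negative_bitableau :: "tableau \<Rightarrow> tableau \<Rightarrow> bool" where
  "negative_bitableau P Q \<longleftrightarrow> same_shape P Q \<and>
     (\<forall>i<length P. termwise_lt (mset (P ! i)) (mset (Q ! i)))"

definition negative_mset :: "(nat \<times> nat) multiset \<Rightarrow> bool" where
  "negative_mset U \<longleftrightarrow> (\<forall>(a, b)\<in>#U. 0 < a \<and> a < b)"

text \<open>In a row, the first entry \<open>\<ge> a\<close> is the smallest such entry
  since rows are strictly increasing.\<close>
fun row_insert :: "nat \<Rightarrow> tableau \<Rightarrow> tableau \<times> nat" where
  "row_insert a [] = ([[a]], 0)"
| "row_insert a (r # rs) =
     (if \<forall>x\<in>set r. x < a then ((r @ [a]) # rs, 0)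
      else (let xs = takeWhile (\<lambda>x. x < a) r; ys = dropWhile (\<lambda>x. x < a) r;
                (rs', j) = row_insert (hd ys) rs
            in ((xs @ a # tl ys) # rs', Suc j)))"

definition bounded_insert :: "nat \<Rightarrow> nat \<Rightarrow> tableau \<Rightarrow> tableau \<times> nat" where
  "bounded_insert b a P =
     (let Pl = map (filter (\<lambda>x. x < b)) P;
          R = map (filter (\<lambda>x. b \<le> x)) P;
          (P', j) = row_insert a Pl
      in (map (\<lambda>i. P' ! i @ (if i < length R then R ! i else [])) [0..<length P'], j))"

definition add_left :: "nat \<Rightarrow> nat \<Rightarrow> tableau \<Rightarrow> tableau" where
  "add_left b j Q = (if j < length Q then Q[j := b # Q ! j] else Q @ [[b]])"

definition brsk_step :: "tableau \<times> tableau \<Rightarrow> nat \<times> nat \<Rightarrow> tableau \<times> tableau" where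
  "brsk_step PQ ab =
     (let (P, Q) = PQ; (a, b) = ab; (P', j) = bounded_insert b a P in (P', add_left b j Q))"

text \<open>The listing of \<open>U\<close>: \<open>b\<close> weakly decreasing, and \<open>a\<close> weakly decreasing among equal \<open>b\<close>.\<close>
definition brsk_list :: "(nat \<times> nat) multiset \<Rightarrow> (nat \<times> nat) list" where
  "brsk_list U = map prod.swap (rev (sorted_list_of_multiset (image_mset prod.swap U)))"

definition BRSK :: "(nat \<times> nat) multiset \<Rightarrow> tableau \<times> tableau" where
  "BRSK U = foldl brsk_step ([], []) (brsk_list U)"

end

(* BRSK is a fold of bounded insertions, so the theorem follows from an invariant that holds
   for the empty bitableau and is preserved by every step.  The two order conditions are
   handled by counting: for multisets of equal size, A is termwise below B iff every up-set
   {x. t \<le> x} contains at most as many elements of A as of B, and these counts change in a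
   controlled way, because the entries of Q are all \<ge> b while a bounded insertion only moves
   entries < b.  Besides the counting inequalities, the invariant records that P^{<m} has weakly
   increasing columns (m the last b inserted) and where the last new box went.  The delicate
   point is that the rows of Q stay strict when the same b is inserted again: the listing
   inserts the a's for equal b in weakly decreasing order, and by the row bumping lemma
   the new box then lies strictly below the previous one, hence in a row not yet containing b. *)

theory Submission
  imports Defs
begin

section \<open>Counting entries and the termwise order\<close>

definition num_less :: "'a::linorder \<Rightarrow> 'a list \<Rightarrow> nat" where
  "num_less t r = length (filter (\<lambda>x. x < t) r)"

definition num_atleast :: "'a::linorder \<Rightarrow> 'a list \<Rightarrow> nat" where
  "num_atleast t r = length (filter (\<lambda>x. t \<le> x) r)"

lemma num_less_simps [simp]:
  "num_less t [] = 0"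
  "num_less t (x # xs) = (if x < t then Suc (num_less t xs) else num_less t xs)"
  "num_less t (xs @ ys) = num_less t xs + num_less t ys"
  by (simp_all add: num_less_def)

lemma num_atleast_simps [simp]:
  "num_atleast t [] = 0"
  "num_atleast t (x # xs) = (if t \<le> x then Suc (num_atleast t xs) else num_atleast t xs)"
  "num_atleast t (xs @ ys) = num_atleast t xs + num_atleast t ys"
  by (simp_all add: num_atleast_def)

lemma num_less_add_num_atleast: "num_less t r + num_atleast t r = length r"
  by (induction r) auto

lemma num_less_le_length: "num_less t r \<le> length r"
  by (simp add: num_less_def)

lemma num_atleast_le_length: "num_atleast t r \<le> length r"
  by (simp add: num_atleast_def)

lemma num_less_mono: "s \<le> t \<Longrightarrow> num_less s r \<le> num_less t r"
  by (induction r) auto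

lemma num_atleast_antimono: "s \<le> t \<Longrightarrow> num_atleast t r \<le> num_atleast s r"
  by (induction r) auto

lemma num_less_strict_mono: "s \<in> set r \<Longrightarrow> s < t \<Longrightarrow> num_less s r < num_less t r"
proof (induction r)
  case (Cons x r)
  then show ?case
    using num_less_mono[of s t r] by (cases "x = s") (auto simp: less_imp_le)
qed simp

lemma num_less_eq_length: "\<forall>x\<in>set r. x < t \<Longrightarrow> num_less t r = length r"
  by (induction r) auto

lemma num_atleast_eq_length: "\<forall>x\<in>set r. t \<le> x \<Longrightarrow> num_atleast t r = length r"
  by (induction r) auto

lemma num_less_filter_less: "num_less t (filter (\<lambda>x. x < b) r) = num_less (min t b) r"
  by (induction r) auto

lemma num_atleast_filter_atleast: "b \<le> t \<Longrightarrow> num_atleast t (filter (\<lambda>x. b \<le> x) r) = num_atleast t r"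
  by (induction r) auto

lemma size_filter_mset_atleast: "size {#x \<in># mset r. t \<le> x#} = num_atleast t r"
  by (metis mset_filter num_atleast_def size_mset)

lemma sorted_list_of_multiset_nth_add_le:
  fixes A B :: "nat multiset"
  assumes size_eq: "size A = size B"
    and up_sets: "\<And>t. size {#x \<in># A. t \<le> x#} \<le> size {#x \<in># B. t + d \<le> x#}"
    and k: "k < size A"
  shows "sorted_list_of_multiset A ! k + d \<le> sorted_list_of_multiset B ! k"
proof (rule ccontr)
  define as bs where "as = sorted_list_of_multiset A" and "bs = sorted_list_of_multiset B"
  define t where "t = as ! k"
  assume "\<not> ?thesis"
  then have bs_k: "bs ! k < t + d" by (simp add: as_def bs_def t_def)
  have len: "length as = size A" "length bs = size A"
    using size_mset[of as] size_mset[of bs] size_eq by (simp_all add: as_def bs_def)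
  have "\<forall>x\<in>set (drop k as). t \<le> x"
    using len k unfolding t_def as_def
    by (auto simp: in_set_conv_nth sorted_nth_mono)
  then have "num_atleast t (drop k as) = size A - k"
    using len by (simp add: num_atleast_eq_length)
  then have "size A - k \<le> num_atleast t as"
    using num_atleast_simps(3)[of t "take k as" "drop k as"] by simp
  also have "\<dots> \<le> num_atleast (t + d) bs"
    using up_sets[of t] size_filter_mset_atleast[of t as] size_filter_mset_atleast[of "t + d" bs]
    by (simp add: as_def bs_def)
  also have "\<dots> = num_atleast (t + d) (drop (Suc k) bs)"
  proof -
    have "bs ! i < t + d" if "i \<le> k" for i
      using le_less_trans[OF _ bs_k] that len k by (simp add: bs_def sorted_nth_mono)
    then have "\<forall>x\<in>set (take (Suc k) bs). x < t + d"
      using len k by (auto simp: in_set_conv_nth less_Suc_eq_le)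
    then have "num_atleast (t + d) (take (Suc k) bs) = 0"
      by (simp add: num_atleast_def filter_empty_conv not_le)
    then show ?thesis
      using num_atleast_simps(3)[of "t + d" "take (Suc k) bs" "drop (Suc k) bs"] by simp
  qed
  also have "\<dots> \<le> size A - Suc k"
    using len num_atleast_le_length[of "t + d" "drop (Suc k) bs"] by simp
  finally show False using k by simp
qed

lemma termwise_leI:
  assumes "size A = size B" and "\<And>t. size {#x \<in># A. t \<le> x#} \<le> size {#x \<in># B. t \<le> x#}"
  shows "termwise_le A B"
  unfolding termwise_le_def using sorted_list_of_multiset_nth_add_le[of A B 0] assms by auto

lemma termwise_ltI:
  assumes "A \<noteq> {#}" and "size A = size B"
    and "\<And>t. size {#x \<in># A. t \<le> x#} \<le> size {#x \<in># B. Suc t \<le> x#}"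
  shows "termwise_lt A B"
  unfolding termwise_lt_def using sorted_list_of_multiset_nth_add_le[of A B 1] assms by fastforce

section \<open>Row insertion\<close>

definition bump_row :: "'a::linorder \<Rightarrow> 'a list \<Rightarrow> 'a list" where
  "bump_row a r = takeWhile (\<lambda>x. x < a) r @ a # tl (dropWhile (\<lambda>x. x < a) r)"

definition bumped :: "'a::linorder \<Rightarrow> 'a list \<Rightarrow> 'a" where
  "bumped a r = hd (dropWhile (\<lambda>x. x < a) r)"

definition insert_row :: "'a::linorder \<Rightarrow> 'a list \<Rightarrow> 'a list" where
  "insert_row a r = (if \<forall>x\<in>set r. x < a then r @ [a] else bump_row a r)"

lemma row_insert_Cons_append: "\<forall>x\<in>set r. x < a \<Longrightarrow> row_insert a (r # rs) = ((r @ [a]) # rs, 0)"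
  by simp

lemma row_insert_Cons_bump:
  "\<not> (\<forall>x\<in>set r. x < a) \<Longrightarrow> row_insert a (r # rs) =
     (bump_row a r # fst (row_insert (bumped a r) rs), Suc (snd (row_insert (bumped a r) rs)))"
  by (simp add: bump_row_def bumped_def Let_def split: prod.split)

declare row_insert.simps(2) [simp del]

lemmas row_insert_Cons = row_insert_Cons_append row_insert_Cons_bump

lemma bump_row_decomp:
  assumes "\<not> (\<forall>x\<in>set r. x < a)"
  obtains xs y zs where "r = xs @ y # zs" and "bumped a r = y" and "bump_row a r = xs @ a # zs"
    and "\<forall>x\<in>set xs. x < a" and "a \<le> y"
proof -
  have "dropWhile (\<lambda>x. x < a) r \<noteq> []"
    using assms by simp
  then have "r = takeWhile (\<lambda>x. x < a) r @ bumped a r # tl (dropWhile (\<lambda>x. x < a) r)"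
    and "a \<le> bumped a r"
    unfolding bumped_def using hd_dropWhile[of "\<lambda>x. x < a" r] by auto
  moreover have "\<forall>x\<in>set (takeWhile (\<lambda>x. x < a) r). x < a"
    by (auto dest: set_takeWhileD)
  ultimately show ?thesis
    using that bump_row_def by blast
qed

lemma bumped_in_row: "\<not> (\<forall>x\<in>set r. x < a) \<Longrightarrow> bumped a r \<in> set r"
  by (rule bump_row_decomp[of r a]) auto

lemma bumped_ge: "\<not> (\<forall>x\<in>set r. x < a) \<Longrightarrow> a \<le> bumped a r"
  by (rule bump_row_decomp[of r a]) auto

lemma bumped_le:
  assumes "sorted_wrt (<) r" and "x \<in> set r" and "a \<le> x"
  shows "bumped a r \<le> x"
proof -
  have "\<not> (\<forall>x\<in>set r. x < a)"
    using assms(2,3) by (auto simp: not_less)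
  then obtain xs y zs where "r = xs @ y # zs" "bumped a r = y" "\<forall>x\<in>set xs. x < a"
    by (rule bump_row_decomp)
  then show ?thesis
    using assms by (auto simp: sorted_wrt_append not_less less_imp_le)
qed

lemma sorted_bump_row:
  assumes "\<not> (\<forall>x\<in>set r. x < a)" and "sorted_wrt (<) r"
  shows "sorted_wrt (<) (bump_row a r)"
proof -
  obtain xs y zs where "r = xs @ y # zs" "bump_row a r = xs @ a # zs"
    "\<forall>x\<in>set xs. x < a" "a \<le> y"
    using assms(1) by (rule bump_row_decomp)
  then show ?thesis
    using assms(2) by (auto simp: sorted_wrt_append intro: le_less_trans less_trans)
qed

lemma length_bump_row: "\<not> (\<forall>x\<in>set r. x < a) \<Longrightarrow> length (bump_row a r) = length r"
  by (rule bump_row_decomp[of r a]) auto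

lemma set_bump_row: "\<not> (\<forall>x\<in>set r. x < a) \<Longrightarrow> set (bump_row a r) \<subseteq> insert a (set r)"
  by (rule bump_row_decomp[of r a]) auto

lemma num_less_bump_row:
  "\<not> (\<forall>x\<in>set r. x < a) \<Longrightarrow>
    num_less t (bump_row a r) + (if bumped a r < t then 1 else 0) = num_less t r + (if a < t then 1 else 0)"
  by (rule bump_row_decomp[of r a]) auto

lemma num_less_insert_row:
  assumes "sorted_wrt (<) s"
  shows "num_less t (insert_row y s) \<le> max (num_less t s) (if y < t then Suc (num_less y s) else 0)"
proof (cases "\<forall>x\<in>set s. x < y")
  case True
  then show ?thesis
    using num_less_le_length[of t s] by (simp add: insert_row_def num_less_eq_length)
next
  case False
  then obtain xs z zs where s: "s = xs @ z # zs" and "bump_row y s = xs @ y # zs"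
    and xs: "\<forall>x\<in>set xs. x < y" and "y \<le> z"
    by (rule bump_row_decomp)
  then have ins: "insert_row y s = xs @ y # zs"
    using False by (simp add: insert_row_def)
  have zs: "\<forall>x\<in>set zs. z < x"
    using assms s by (simp add: sorted_wrt_append)
  show ?thesis
  proof (cases "y < t \<and> t \<le> z")
    case True
    then have "num_less t zs = 0" and "num_less y zs = 0"
      using zs \<open>y \<le> z\<close> by (auto simp: num_less_def filter_empty_conv)
    then show ?thesis
      using True xs \<open>y \<le> z\<close> num_less_le_length[of t xs] unfolding ins
      by (simp add: s num_less_eq_length not_less)
  next
    case False
    then show ?thesis
      unfolding ins using \<open>y \<le> z\<close> by (auto simp: s)
  qed
qed

(* For strictly increasing rows, dominates r s says that s is at most as long as r and
   s can be placed under r with weakly increasing columns. *)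
definition dominates :: "'a::linorder list \<Rightarrow> 'a list \<Rightarrow> bool" where
  "dominates r s \<longleftrightarrow> (\<forall>t. num_less t s \<le> num_less t r)"

lemma dominates_Nil [simp]: "dominates r []"
  by (simp add: dominates_def)

lemma dominates_snoc: "dominates r s \<Longrightarrow> dominates (r @ [a]) s"
  by (auto simp: dominates_def intro: le_trans)

lemma dominates_bump_row:
  assumes r: "sorted_wrt (<) r" and s: "sorted_wrt (<) s" and "dominates r s"
    and bump: "\<not> (\<forall>x\<in>set r. x < a)"
  shows "dominates (bump_row a r) (insert_row (bumped a r) s)"
  unfolding dominates_def
proof
  fix t
  let ?y = "bumped a r"
  have r_s: "num_less u s \<le> num_less u r" for u
    using \<open>dominates r s\<close> by (simp add: dominates_def)
  have "a \<le> ?y"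
    using bump by (rule bumped_ge)
  have "Suc (num_less ?y r) \<le> num_less t r" if "?y < t"
    using num_less_strict_mono[OF bumped_in_row[OF bump] that] by simp
  then have "max (num_less t s) (if ?y < t then Suc (num_less ?y s) else 0)
      \<le> num_less t (bump_row a r)"
    using num_less_bump_row[OF bump, of t] r_s[of t] r_s[of ?y] \<open>a \<le> ?y\<close>
    by (auto split: if_splits)
  then show "num_less t (insert_row ?y s) \<le> num_less t (bump_row a r)"
    using num_less_insert_row[OF s, of t ?y] by linarith
qed

abbreviation below :: "'a::linorder \<Rightarrow> 'a list list \<Rightarrow> 'a list list" where
  "below b P \<equiv> map (filter (\<lambda>x. x < b)) P"

definition weak_semistandard :: "'a::linorder list list \<Rightarrow> bool" where
  "weak_semistandard T \<longleftrightarrow> (\<forall>r\<in>set T. sorted_wrt (<) r) \<and> successively dominates T"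

lemma weak_semistandard_Cons:
  "weak_semistandard (r # T) \<longleftrightarrow>
     sorted_wrt (<) r \<and> weak_semistandard T \<and> dominates r (if T = [] then [] else hd T)"
  by (auto simp: weak_semistandard_def successively_Cons)

lemma weak_semistandard_below: "weak_semistandard T \<Longrightarrow> weak_semistandard (below b T)"
  unfolding weak_semistandard_def successively_map
  by (auto simp: sorted_wrt_filter dominates_def num_less_filter_less elim!: successively_mono)

lemma weak_semistandard_num_less_le:
  assumes "weak_semistandard (below b T)" and "t \<le> b" and "Suc i < length T"
  shows "num_less t (T ! Suc i) \<le> num_less t (T ! i)"
proof -
  have "dominates (below b T ! i) (below b T ! Suc i)"
    using assms(1,3) successively_nth[of dominates "below b T" i] by (simp add: weak_semistandard_def)
  then have "num_less t (below b T ! Suc i) \<le> num_less t (below b T ! i)"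
    by (simp add: dominates_def)
  then show ?thesis
    using assms(2,3) by (simp add: num_less_filter_less min_absorb1)
qed

lemma row_insert_ne_Nil: "fst (row_insert a T) \<noteq> []"
  by (cases T; cases "\<forall>x\<in>set (hd T). x < a") (auto simp: row_insert_Cons)

lemma hd_row_insert: "hd (fst (row_insert a T)) = insert_row a (if T = [] then [] else hd T)"
  by (cases T; cases "\<forall>x\<in>set (hd T). x < a") (auto simp: insert_row_def row_insert_Cons)

lemma snd_row_insert_le: "snd (row_insert a T) \<le> length T"
proof (induction T arbitrary: a)
  case (Cons r T)
  then show ?case
    by (cases "\<forall>x\<in>set r. x < a") (auto simp: row_insert_Cons)
qed simp

lemma length_row_insert:
  "length (fst (row_insert a T)) = length T + (if snd (row_insert a T) = length T then 1 else 0)"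
proof (induction T arbitrary: a)
  case (Cons r T)
  then show ?case
    by (cases "\<forall>x\<in>set r. x < a") (auto simp: row_insert_Cons)
qed simp

lemma length_nth_row_insert:
  "i < length (fst (row_insert a T)) \<Longrightarrow> length (fst (row_insert a T) ! i) =
     (if i < length T then length (T ! i) else 0) + (if i = snd (row_insert a T) then 1 else 0)"
proof (induction T arbitrary: a i)
  case (Cons r T)
  then show ?case
    by (cases "\<forall>x\<in>set r. x < a"; cases i)
      (auto simp: row_insert_Cons length_bump_row)
qed simp

lemma set_concat_row_insert: "set (concat (fst (row_insert a T))) \<subseteq> insert a (set (concat T))"
proof (induction T arbitrary: a)
  case (Cons r T)
  show ?case
  proof (cases "\<forall>x\<in>set r. x < a")
    case False
    then show ?thesis
      using Cons.IH[of "bumped a r"] set_bump_row[OF False] bumped_in_row[OF False]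
      by (auto simp: row_insert_Cons_bump)
  qed (auto simp: row_insert_Cons_append)
qed simp

lemma weak_semistandard_row_insert:
  "weak_semistandard T \<Longrightarrow> weak_semistandard (fst (row_insert a T))"
proof (induction T arbitrary: a)
  case Nil
  then show ?case
    by (simp add: weak_semistandard_def)
next
  case (Cons r T)
  then have r: "sorted_wrt (<) r" and T: "weak_semistandard T"
    and r_T: "dominates r (if T = [] then [] else hd T)"
    by (simp_all add: weak_semistandard_Cons)
  show ?case
  proof (cases "\<forall>x\<in>set r. x < a")
    case True
    then show ?thesis
      using r T r_T
      by (simp add: row_insert_Cons_append weak_semistandard_Cons sorted_wrt_append dominates_snoc)
  next
    case False
    let ?s = "if T = [] then [] else hd T"
    have "sorted_wrt (<) ?s"
      using T by (cases T) (simp_all add: weak_semistandard_Cons)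
    then have "dominates (bump_row a r) (insert_row (bumped a r) ?s)"
      using dominates_bump_row[OF r _ r_T False] by blast
    then show ?thesis
      using False sorted_bump_row[OF False r] Cons.IH[OF T, of "bumped a r"]
      by (simp add: row_insert_Cons_bump weak_semistandard_Cons row_insert_ne_Nil hd_row_insert)
  qed
qed

fun increasing_path :: "'a::linorder list list \<Rightarrow> 'a \<Rightarrow> nat \<Rightarrow> bool" where
  "increasing_path [] c j = False"
| "increasing_path (r # T) c 0 = (\<exists>x\<in>set r. c \<le> x)"
| "increasing_path (r # T) c (Suc j) = (\<exists>x\<in>set r. c \<le> x \<and> increasing_path T x j)"

lemma increasing_path_antimono: "increasing_path T c j \<Longrightarrow> c' \<le> c \<Longrightarrow> increasing_path T c' j"
  by (cases T; cases j) (auto intro: order_trans)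

lemma increasing_path_row_insert: "increasing_path (fst (row_insert a T)) a (snd (row_insert a T))"
proof (induction T arbitrary: a)
  case (Cons r T)
  show ?case
  proof (cases "\<forall>x\<in>set r. x < a")
    case False
    then have "increasing_path (fst (row_insert (bumped a r) T)) a (snd (row_insert (bumped a r) T))"
      using Cons.IH bumped_ge increasing_path_antimono by blast
    then show ?thesis
      using False by (auto simp: row_insert_Cons_bump bump_row_def)
  qed (simp add: row_insert_Cons_append)
qed simp

lemma row_insert_below_path:
  assumes "\<forall>r\<in>set T. sorted_wrt (<) r" and "increasing_path T c k" and "a \<le> c"
  shows "k < snd (row_insert a T)"
  using assms
proof (induction T arbitrary: a c k)
  case (Cons r T)
  then obtain x where x: "x \<in> set r" "c \<le> x"
    and path: "k = 0 \<or> (\<exists>k'. k = Suc k' \<and> increasing_path T x k')"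
    by (cases k) auto
  have bump: "\<not> (\<forall>x\<in>set r. x < a)"
    using x Cons.prems(3) by (auto simp: not_less intro: order_trans)
  have "bumped a r \<le> x"
    using Cons.prems(1,3) x by (intro bumped_le) auto
  then show ?case
    using path Cons.IH[of x _ "bumped a r"] Cons.prems(1) bump by (auto simp: row_insert_Cons_bump)
qed simp

lemma sorted_rows_row_insert:
  "\<forall>r\<in>set T. sorted_wrt (<) r \<Longrightarrow> \<forall>r\<in>set (fst (row_insert a T)). sorted_wrt (<) r"
proof (induction T arbitrary: a)
  case (Cons r T)
  then show ?case
    by (cases "\<forall>x\<in>set r. x < a") (auto simp: row_insert_Cons sorted_wrt_append sorted_bump_row)
qed simp

section \<open>Bounded insertion\<close>

lemma bounded_insert_eq:
  "bounded_insert b a P =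
    (map (\<lambda>i. fst (row_insert a (below b P)) ! i @
                (if i < length P then filter (\<lambda>x. b \<le> x) (P ! i) else []))
       [0..<length (fst (row_insert a (below b P)))],
     snd (row_insert a (below b P)))"
  by (simp add: bounded_insert_def Let_def split: prod.split)

context
  fixes b a :: nat and P P' :: tableau and j :: nat
  assumes bi: "bounded_insert b a P = (P', j)"
begin

lemma snd_bounded_insert: "j = snd (row_insert a (below b P))"
  using bi by (simp add: bounded_insert_eq)

lemma length_bounded_insert_eq_row_insert: "length P' = length (fst (row_insert a (below b P)))"
  using bi by (auto simp: bounded_insert_eq)

lemma length_bounded_insert: "length P' = length P + (if j = length P then 1 else 0)"
  using length_row_insert[of a "below b P"] by (simp add: length_bounded_insert_eq_row_insert snd_bounded_insert)

lemma snd_bounded_insert_le: "j \<le> length P"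
  using snd_row_insert_le[of a "below b P"] by (simp add: snd_bounded_insert)

lemma nth_bounded_insert:
  "i < length P' \<Longrightarrow>
    P' ! i = fst (row_insert a (below b P)) ! i @
      (if i < length P then filter (\<lambda>x. b \<le> x) (P ! i) else [])"
  using bi by (auto simp: bounded_insert_eq)

lemma length_nth_bounded_insert:
  assumes "i < length P'"
  shows "length (P' ! i) = (if i < length P then length (P ! i) else 0) + (if i = j then 1 else 0)"
proof -
  have "i < length (fst (row_insert a (below b P)))"
    using assms by (simp add: length_bounded_insert_eq_row_insert)
  then show ?thesis
    using length_nth_row_insert[of i a "below b P"] nth_bounded_insert[OF assms]
      sum_length_filter_compl[of "\<lambda>x. x < b" "P ! i"]
    by (simp add: snd_bounded_insert not_less)
qed

lemma set_nth_bounded_insert: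
  assumes i: "i < length P'"
  shows "set (P' ! i) \<subseteq> insert a (set (concat P))"
proof -
  let ?T' = "fst (row_insert a (below b P))"
  have "?T' ! i \<in> set ?T'"
    using i by (simp add: length_bounded_insert_eq_row_insert)
  then have "set (?T' ! i) \<subseteq> insert a (set (concat (below b P)))"
    using set_concat_row_insert[of a "below b P"] by auto
  also have "\<dots> \<subseteq> insert a (set (concat P))"
    by auto
  finally show ?thesis
    using nth_bounded_insert[OF i] by (auto simp: set_concat)
qed

lemma pos_entries_bounded_insert: "pos_entries P \<Longrightarrow> 0 < a \<Longrightarrow> pos_entries P'"
  using set_nth_bounded_insert by (fastforce simp: pos_entries_def in_set_conv_nth)

lemma below_bounded_insert:
  assumes "a < b"
  shows "below b P' = fst (row_insert a (below b P))"
proof (rule nth_equalityI)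
  show "length (below b P') = length (fst (row_insert a (below b P)))"
    by (simp add: length_bounded_insert_eq_row_insert)
next
  fix i
  assume "i < length (below b P')"
  then have i: "i < length P'" and i': "i < length (fst (row_insert a (below b P)))"
    by (simp_all add: length_bounded_insert_eq_row_insert)
  have "\<forall>x\<in>set (fst (row_insert a (below b P)) ! i). x < b"
    using nth_mem[OF i'] set_concat_row_insert[of a "below b P"] assms by fastforce
  then show "below b P' ! i = fst (row_insert a (below b P)) ! i"
    using i by (simp add: nth_bounded_insert filter_empty_conv)
qed

lemma weak_semistandard_bounded_insert:
  assumes "weak_semistandard (below m P)" and "b \<le> m" and "a < b"
  shows "weak_semistandard (below b P')"
proof -
  have "below b (below m P) = below b P"
    using \<open>b \<le> m\<close> by (auto intro!: filter_cong)
  then have "weak_semistandard (below b P)"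
    using weak_semistandard_below[OF assms(1), of b] by (simp only:)
  then show ?thesis
    using weak_semistandard_row_insert by (simp add: below_bounded_insert[OF assms(3)])
qed

lemma num_atleast_bounded_insert:
  assumes "a < b" and "b \<le> t" and i: "i < length P'"
  shows "num_atleast t (P' ! i) = (if i < length P then num_atleast t (P ! i) else 0)"
proof -
  have "\<forall>x\<in>set (below b P' ! i). x < t"
    using assms by auto
  then have "num_atleast t (fst (row_insert a (below b P)) ! i) = 0"
    using below_bounded_insert[OF assms(1)] by (simp add: num_atleast_def filter_empty_conv not_le)
  then show ?thesis
    using nth_bounded_insert[OF i] assms(2) by (simp add: num_atleast_filter_atleast)
qed

lemma row_strict_bounded_insert:
  assumes "row_strict P" and "a < b"
  shows "row_strict P'"
  unfolding row_strict_def all_set_conv_all_nth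
proof (intro allI impI)
  fix i
  assume i: "i < length P'"
  let ?T' = "fst (row_insert a (below b P))"
  have "\<forall>r\<in>set ?T'. sorted_wrt (<) r"
    using assms(1) by (intro sorted_rows_row_insert) (auto simp: row_strict_def sorted_wrt_filter)
  then have low_sorted: "sorted_wrt (<) (?T' ! i)"
    using i by (simp add: length_bounded_insert_eq_row_insert)
  have "?T' ! i = filter (\<lambda>x. x < b) (P' ! i)"
    using below_bounded_insert[OF assms(2)] i by (metis nth_map)
  then have low_less: "\<forall>x\<in>set (?T' ! i). x < b"
    by simp
  have high_sorted: "sorted_wrt (<) (if i < length P then filter (\<lambda>x. b \<le> x) (P ! i) else [])"
    using assms(1) by (auto simp: row_strict_def sorted_wrt_filter)
  show "sorted_wrt (<) (P' ! i)"
    unfolding nth_bounded_insert[OF i] sorted_wrt_append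
    using low_sorted low_less high_sorted by (auto intro: less_le_trans)
qed

end

lemma length_add_left:
  "j \<le> length Q \<Longrightarrow> length (add_left b j Q) = length Q + (if j = length Q then 1 else 0)"
  by (simp add: add_left_def)

lemma nth_add_left:
  "j \<le> length Q \<Longrightarrow> i < length (add_left b j Q) \<Longrightarrow>
    add_left b j Q ! i = (if i = j then b # (if j < length Q then Q ! j else []) else Q ! i)"
  by (auto simp: add_left_def nth_append)

lemma set_nth_add_left:
  "j \<le> length Q \<Longrightarrow> i < length (add_left b j Q) \<Longrightarrow>
    set (add_left b j Q ! i) = (if i = j then {b} else {}) \<union> (if i < length Q then set (Q ! i) else {})"
  by (auto simp: nth_add_left length_add_left split: if_splits)

lemma row_strict_add_left:
  assumes "row_strict Q" and "j < length Q \<Longrightarrow> \<forall>x\<in>set (Q ! j). b < x"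
  shows "row_strict (add_left b j Q)"
  using assms set_update_subset_insert[of Q j "b # Q ! j"]
  by (fastforce simp: add_left_def row_strict_def)

lemma rows_add_left:
  assumes "\<forall>r\<in>set Q. r \<noteq> [] \<and> (\<forall>x\<in>set r. p x)" and "p b"
  shows "\<forall>r\<in>set (add_left b j Q). r \<noteq> [] \<and> (\<forall>x\<in>set r. p x)"
proof
  fix r
  assume r: "r \<in> set (add_left b j Q)"
  consider "j < length Q" "r = b # Q ! j" | "r \<in> set Q" | "r = [b]"
    using r set_update_subset_insert[of Q j "b # Q ! j"] by (auto simp: add_left_def split: if_splits)
  then show "r \<noteq> [] \<and> (\<forall>x\<in>set r. p x)"
    using assms by cases (auto dest: nth_mem)
qed

lemma num_atleast_add_left:
  "j \<le> length Q \<Longrightarrow> b < t \<Longrightarrow> i < length (add_left b j Q) \<Longrightarrow>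
    num_atleast t (add_left b j Q ! i) = (if i < length Q then num_atleast t (Q ! i) else 0)"
  by (auto simp: nth_add_left length_add_left split: if_splits)

lemma num_atleast_add_left_eq_length:
  assumes "\<forall>r\<in>set Q. \<forall>x\<in>set r. b \<le> x" and "t \<le> b" and "j \<le> length Q"
    and "i < length (add_left b j Q)"
  shows "num_atleast t (add_left b j Q ! i) = length (add_left b j Q ! i)"
proof -
  have "\<forall>x\<in>set (add_left b j Q ! i). b \<le> x"
    using assms by (auto simp: set_nth_add_left split: if_splits)
  then show ?thesis
    using assms(2) by (auto intro: num_atleast_eq_length order_trans)
qed

(* Counting forms of the conditions P_i - Q_i \<le> P_{i+1} - Q_{i+1} and P_i \<lessdot> Q_i;
   see sorted_list_of_multiset_nth_add_le. *)
definition counting_semistandard :: "tableau \<Rightarrow> tableau \<Rightarrow> bool" where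
  "counting_semistandard P Q \<longleftrightarrow> (\<forall>i t. Suc i < length P \<longrightarrow>
     num_atleast t (P ! i) + num_atleast t (Q ! Suc i) \<le> num_atleast t (P ! Suc i) + num_atleast t (Q ! i))"

definition counting_negative :: "tableau \<Rightarrow> tableau \<Rightarrow> bool" where
  "counting_negative P Q \<longleftrightarrow>
     (\<forall>i t. i < length P \<longrightarrow> num_atleast t (P ! i) \<le> num_atleast (Suc t) (Q ! i))"

lemma counting_negative_num_atleast_le:
  "counting_negative P Q \<Longrightarrow> i < length P \<Longrightarrow> num_atleast t (P ! i) \<le> num_atleast t (Q ! i)"
  unfolding counting_negative_def by (meson num_atleast_antimono le_SucI order.refl order_trans)

lemma semistandard_bitableauI:
  assumes "pos_entries P" and "pos_entries Q" and shape: "same_shape P Q"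
    and "row_strict P" and "row_strict Q" and counting: "counting_semistandard P Q"
  shows "semistandard_bitableau P Q"
proof -
  have "diff_le (mset (P ! i)) (mset (Q ! i)) (mset (P ! Suc i)) (mset (Q ! Suc i))"
    if "Suc i < length P" for i
    unfolding diff_le_def
  proof (rule termwise_leI)
    show "size (mset (P ! i) + mset (Q ! Suc i)) = size (mset (P ! Suc i) + mset (Q ! i))"
      using shape that by (simp add: same_shape_def)
    show "size {#x \<in># mset (P ! i) + mset (Q ! Suc i). t \<le> x#}
        \<le> size {#x \<in># mset (P ! Suc i) + mset (Q ! i). t \<le> x#}" for t
      using counting that by (simp add: counting_semistandard_def size_filter_mset_atleast)
  qed
  then show ?thesis
    using assms by (simp add: semistandard_bitableau_def)
qed

lemma negative_bitableauI:
  assumes shape: "same_shape P Q" and "\<forall>r\<in>set Q. r \<noteq> []" and counting: "counting_negative P Q"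
  shows "negative_bitableau P Q"
proof -
  have "termwise_lt (mset (P ! i)) (mset (Q ! i))" if i: "i < length P" for i
  proof (rule termwise_ltI)
    have "Q ! i \<noteq> []"
      using assms(2) shape i by (simp add: same_shape_def)
    then show "mset (P ! i) \<noteq> {#}"
      using shape i by (auto simp: same_shape_def)
    show "size (mset (P ! i)) = size (mset (Q ! i))"
      using shape i by (simp add: same_shape_def)
    show "size {#x \<in># mset (P ! i). t \<le> x#} \<le> size {#x \<in># mset (Q ! i). Suc t \<le> x#}" for t
      using counting i by (simp add: counting_negative_def size_filter_mset_atleast)
  qed
  then show ?thesis
    using shape by (simp add: negative_bitableau_def)
qed

context
  fixes b a :: nat and P P' Q :: tableau and j :: nat
  assumes bi: "bounded_insert b a P = (P', j)" and shape: "same_shape P Q"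
begin

lemma snd_bounded_insert_le_length: "j \<le> length Q"
  using snd_bounded_insert_le[OF bi] shape by (simp add: same_shape_def)

lemma same_shape_add_left: "same_shape P' (add_left b j Q)"
  using shape snd_bounded_insert_le_length length_bounded_insert[OF bi] length_nth_bounded_insert[OF bi]
  by (auto simp: same_shape_def length_add_left nth_add_left)

lemma counting_semistandard_add_left:
  assumes "a < b" and semi: "counting_semistandard P Q" and neg: "counting_negative P Q"
    and Q_ge: "\<forall>r\<in>set Q. \<forall>x\<in>set r. b \<le> x" and ws: "weak_semistandard (below b P')"
  shows "counting_semistandard P' (add_left b j Q)"
  unfolding counting_semistandard_def
proof (intro allI impI)
  fix i t
  assume si: "Suc i < length P'"
  let ?Q' = "add_left b j Q"
  note j = snd_bounded_insert_le_length and shape' = same_shape_add_left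
  have len: "length Q = length P"
    using shape by (simp add: same_shape_def)
  show "num_atleast t (P' ! i) + num_atleast t (?Q' ! Suc i)
      \<le> num_atleast t (P' ! Suc i) + num_atleast t (?Q' ! i)"
  proof (cases "t \<le> b")
    case True
    have Q'_full: "num_atleast t (?Q' ! k) = length (P' ! k)" if "k < length P'" for k
      using num_atleast_add_left_eq_length[OF Q_ge True j] shape' that by (simp add: same_shape_def)
    show ?thesis
      using weak_semistandard_num_less_le[OF ws True si]
        num_less_add_num_atleast[of t "P' ! i"] num_less_add_num_atleast[of t "P' ! Suc i"]
        Q'_full[of i] Q'_full[of "Suc i"] si by simp
  next
    case False
    then have P'_eq: "num_atleast t (P' ! k) = (if k < length P then num_atleast t (P ! k) else 0)"
      and Q'_eq: "num_atleast t (?Q' ! k) = (if k < length Q then num_atleast t (Q ! k) else 0)"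
      if "k < length P'" for k
      using that num_atleast_bounded_insert[OF bi \<open>a < b\<close>] num_atleast_add_left[OF j] shape'
      by (simp_all add: same_shape_def)
    show ?thesis
    proof (cases "Suc i < length P")
      case True
      then show ?thesis
        using semi si P'_eq Q'_eq len by (simp add: counting_semistandard_def)
    next
      case False
      then have "Suc i = length P"
        using si length_bounded_insert[OF bi] by (auto split: if_splits)
      then show ?thesis
        using counting_negative_num_atleast_le[OF neg, of i t] si P'_eq Q'_eq len by simp
    qed
  qed
qed

lemma counting_negative_add_left:
  assumes "a < b" and neg: "counting_negative P Q" and Q_ge: "\<forall>r\<in>set Q. \<forall>x\<in>set r. b \<le> x"
  shows "counting_negative P' (add_left b j Q)"
  unfolding counting_negative_def
proof (intro allI impI)
  fix i t
  assume i: "i < length P'"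
  let ?Q' = "add_left b j Q"
  note j = snd_bounded_insert_le_length and shape' = same_shape_add_left
  have len: "length Q = length P"
    using shape by (simp add: same_shape_def)
  show "num_atleast t (P' ! i) \<le> num_atleast (Suc t) (?Q' ! i)"
  proof (cases "b \<le> t")
    case True
    have "num_atleast t (P' ! i) = (if i < length P then num_atleast t (P ! i) else 0)"
      using num_atleast_bounded_insert[OF bi \<open>a < b\<close> True i] .
    moreover have "num_atleast (Suc t) (?Q' ! i) = (if i < length Q then num_atleast (Suc t) (Q ! i) else 0)"
      using num_atleast_add_left[OF j] True i shape' by (simp add: same_shape_def)
    ultimately show ?thesis
      using neg len by (simp add: counting_negative_def)
  next
    case False
    then have "num_atleast (Suc t) (?Q' ! i) = length (P' ! i)"
      using num_atleast_add_left_eq_length[OF Q_ge _ j] i shape' by (simp add: same_shape_def)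
    then show ?thesis
      by (simp add: num_atleast_le_length)
  qed
qed

end

section \<open>The BRSK invariant\<close>

(* (m, c) is the last pair (b, a) inserted and k the row of its new box. *)
definition brsk_inv :: "nat \<Rightarrow> nat \<Rightarrow> nat \<Rightarrow> tableau \<Rightarrow> tableau \<Rightarrow> bool" where
  "brsk_inv m c k P Q \<longleftrightarrow>
     same_shape P Q \<and> row_strict P \<and> row_strict Q \<and> pos_entries P \<and> pos_entries Q \<and>
     counting_semistandard P Q \<and> counting_negative P Q \<and>
     (\<forall>r\<in>set Q. r \<noteq> [] \<and> (\<forall>x\<in>set r. m \<le> x)) \<and>
     weak_semistandard (below m P) \<and>
     (\<forall>i<length Q. m \<in> set (Q ! i) \<longrightarrow> i \<le> k \<and> increasing_path (below m P) c k)"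

lemma brsk_inv_Nil: "brsk_inv m c k [] []"
  by (simp add: brsk_inv_def same_shape_def row_strict_def pos_entries_def counting_semistandard_def
      counting_negative_def weak_semistandard_def)

lemma brsk_inv_imp_semistandard_negative:
  "brsk_inv m c k P Q \<Longrightarrow> semistandard_bitableau P Q \<and> negative_bitableau P Q"
  by (simp add: brsk_inv_def semistandard_bitableauI negative_bitableauI)

lemma brsk_step_eq:
  "bounded_insert b a P = (P', j) \<Longrightarrow> brsk_step (P, Q) (a, b) = (P', add_left b j Q)"
  by (simp add: brsk_step_def)

lemma brsk_inv_new_box_below:
  assumes inv: "brsk_inv m c k P Q" and "(b, a) \<le> (m, c)" and "i < length Q" and "b \<in> set (Q ! i)"
  shows "i < snd (row_insert a (below b P))"
proof -
  have "m \<le> b" and "b \<le> m"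
    using assms by (auto simp: brsk_inv_def less_eq_prod_def dest: nth_mem)
  then have "b = m" and "a \<le> c"
    using \<open>(b, a) \<le> (m, c)\<close> by (auto simp: less_eq_prod_def)
  then have "i \<le> k" and "increasing_path (below b P) c k"
    using inv assms(3,4) by (auto simp: brsk_inv_def)
  moreover have "\<forall>r\<in>set (below b P). sorted_wrt (<) r"
    using inv by (auto simp: brsk_inv_def row_strict_def sorted_wrt_filter)
  ultimately show ?thesis
    using row_insert_below_path[of "below b P" c k a] \<open>a \<le> c\<close> by simp
qed

lemma brsk_inv_bounded_insert:
  assumes inv: "brsk_inv m c k P Q" and "0 < a" and "a < b" and "(b, a) \<le> (m, c)"
    and bi: "bounded_insert b a P = (P', j)"
  shows "brsk_inv b a j P' (add_left b j Q)"
proof -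
  from inv have shape: "same_shape P Q" and "row_strict P" "row_strict Q" "pos_entries P"
    and semi: "counting_semistandard P Q" and neg: "counting_negative P Q"
    and Q_rows: "\<forall>r\<in>set Q. r \<noteq> [] \<and> (\<forall>x\<in>set r. m \<le> x)" and "pos_entries Q"
    and ws: "weak_semistandard (below m P)"
    by (simp_all add: brsk_inv_def)
  have "b \<le> m"
    using \<open>(b, a) \<le> (m, c)\<close> by (auto simp: less_eq_prod_def)
  note j = snd_bounded_insert_le_length[OF bi shape] and j_eq = snd_bounded_insert[OF bi]
  have Q_ge: "\<forall>r\<in>set Q. \<forall>x\<in>set r. b \<le> x"
    using Q_rows \<open>b \<le> m\<close> by (auto intro: order_trans)
  have ws': "weak_semistandard (below b P')"
    using weak_semistandard_bounded_insert[OF bi ws \<open>b \<le> m\<close> \<open>a < b\<close>] .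
  have new_box: "i < j" if "i < length Q" and "b \<in> set (Q ! i)" for i
    using brsk_inv_new_box_below[OF inv \<open>(b, a) \<le> (m, c)\<close> that] j_eq by simp
  have "row_strict (add_left b j Q)"
  proof (rule row_strict_add_left[OF \<open>row_strict Q\<close>])
    show "\<forall>x\<in>set (Q ! j). b < x" if "j < length Q"
      using Q_ge new_box that by (fastforce simp: order.order_iff_strict dest: nth_mem)
  qed
  moreover have "\<forall>r\<in>set (add_left b j Q). r \<noteq> [] \<and> (\<forall>x\<in>set r. b \<le> x \<and> 0 < x)"
    using Q_ge Q_rows \<open>pos_entries Q\<close> \<open>0 < a\<close> \<open>a < b\<close> j
    by (intro rows_add_left) (auto simp: pos_entries_def)
  moreover have "\<forall>i<length (add_left b j Q). b \<in> set (add_left b j Q ! i) \<longrightarrow> i \<le> j"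
    using j by (auto simp: set_nth_add_left length_add_left dest: new_box)
  ultimately show ?thesis
    using pos_entries_bounded_insert[OF bi \<open>pos_entries P\<close> \<open>0 < a\<close>]
      same_shape_add_left[OF bi shape] row_strict_bounded_insert[OF bi \<open>row_strict P\<close> \<open>a < b\<close>]
      counting_semistandard_add_left[OF bi shape \<open>a < b\<close> semi neg Q_ge ws']
      counting_negative_add_left[OF bi shape \<open>a < b\<close> neg Q_ge] ws'
      increasing_path_row_insert[of a "below b P"]
    by (auto simp: brsk_inv_def pos_entries_def below_bounded_insert[OF bi \<open>a < b\<close>] j_eq)
qed

lemma brsk_inv_foldl:
  assumes "brsk_inv m c k P Q" and "\<forall>(a, b)\<in>set L. 0 < a \<and> a < b \<and> (b, a) \<le> (m, c)"
    and "sorted_wrt (\<lambda>p q. prod.swap q \<le> prod.swap p) L"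
  shows "\<exists>m c k. brsk_inv m c k (fst (foldl brsk_step (P, Q) L)) (snd (foldl brsk_step (P, Q) L))"
  using assms
proof (induction L arbitrary: P Q m c k)
  case (Cons p L)
  obtain a b where p: "p = (a, b)"
    by fastforce
  obtain P' j where bi: "bounded_insert b a P = (P', j)"
    by fastforce
  have "brsk_inv b a j P' (add_left b j Q)"
    using Cons.prems(1,2) p bi by (intro brsk_inv_bounded_insert) auto
  moreover have "\<forall>(a', b')\<in>set L. 0 < a' \<and> a' < b' \<and> (b', a') \<le> (b, a)"
    using Cons.prems(2,3) p by fastforce
  ultimately show ?case
    using Cons.IH Cons.prems(3) p brsk_step_eq[OF bi] by simp
qed auto

lemma set_brsk_list: "set (brsk_list U) = set_mset U"
  by (simp add: brsk_list_def image_image)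

lemma sorted_brsk_list: "sorted_wrt (\<lambda>p q. prod.swap q \<le> prod.swap p) (brsk_list U)"
  unfolding brsk_list_def sorted_wrt_map sorted_wrt_rev
  using sorted_sorted_list_of_multiset[of "image_mset prod.swap U"] by (simp add: sorted_wrt_iff_nth_less)

theorem lemma6p2:
  fixes U :: "(nat \<times> nat) multiset"
  assumes "negative_mset U"
  shows "semistandard_bitableau (fst (BRSK U)) (snd (BRSK U)) \<and>
         negative_bitableau (fst (BRSK U)) (snd (BRSK U))"
proof -
  define m where "m = Suc (Max (insert 0 (snd ` set_mset U)))"
  have "b < m" if "(a, b) \<in># U" for a b
  proof -
    have "b \<in> insert 0 (snd ` set_mset U)"
      using that by force
    then show ?thesis
      by (simp add: m_def le_imp_less_Suc)
  qed
  then have "\<forall>(a, b)\<in>set (brsk_list U). 0 < a \<and> a < b \<and> (b, a) \<le> (m, 0)"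
    using assms by (fastforce simp: set_brsk_list negative_mset_def)
  then obtain m c k where "brsk_inv m c k (fst (BRSK U)) (snd (BRSK U))"
    using brsk_inv_foldl[OF brsk_inv_Nil _ sorted_brsk_list] unfolding BRSK_def by blast
  then show ?thesis
    by (rule brsk_inv_imp_semistandard_negative)
qed

end
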